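(* Let $\Gamma$ be a nontrivial standard graph and let $f$ be a non-constant real eigenfunction of $\Gamma$. Then $f$ is a Morse eigenfunction if and only if there is no edge $e$ of $\Gamma$ with $f|_e\equiv0$.
   Context: A metric graph is a finite connected graph $\Gamma=(\mathcal{V},\mathcal{E})$ (loops allowed) in which each edge $e$ is identified with an interval $[0,L_e]$, $L_e>0$. The Laplacian acts as $f|_e\mapsto -\frac{d^2}{dx_e^2}f|_e$ on functions in $\bigoplus_{e}H^2([0,L_e])$ satisfying Neumann (Kirchhoff) vertex conditions at every vertex $v$: $f$ is continuous at $v$ and the sum over edges incident to $v$ of the outgoing derivatives of $f$ at $v$ is zero. Such a graph is called standard; it is assumed to have no vertices of degree two, and it is nontrivial if it is not a single loop. An eigenfunction $f$ is called Morse if for each edge $e$, $f|_e$ is a Morse function, i.e. at no interior point of $e$ do both $f|_e'$ and $f|_e''$ vanish. *)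

theory Defs
  imports "HOL-Analysis.Analysis"
begin

text \<open>Edge e is identified with the interval [0, L e], x = 0 at src e and x = L e at tgt e.
  A function on the graph is a family f :: 'e => real => real, f e being f restricted to e
  (only the values on [0, L e] matter).\<close>

definition metric_graph ::
  "'v set \<Rightarrow> 'e set \<Rightarrow> ('e \<Rightarrow> 'v) \<Rightarrow> ('e \<Rightarrow> 'v) \<Rightarrow> ('e \<Rightarrow> real) \<Rightarrow> bool" where
  "metric_graph V E src tgt L \<longleftrightarrow>
     finite V \<and> finite E \<and> V \<noteq> {} \<and>
     (\<forall>e\<in>E. src e \<in> V \<and> tgt e \<in> V \<and> L e > 0)"

definition graph_connected ::
  "'v set \<Rightarrow> 'e set \<Rightarrow> ('e \<Rightarrow> 'v) \<Rightarrow> ('e \<Rightarrow> 'v) \<Rightarrow> bool" where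
  "graph_connected V E src tgt \<longleftrightarrow>
     (\<forall>u\<in>V. \<forall>w\<in>V. (u, w) \<in> ({(src e, tgt e) | e. e \<in> E} \<union> {(tgt e, src e) | e. e \<in> E})\<^sup>*)"

definition vdegree :: "'e set \<Rightarrow> ('e \<Rightarrow> 'v) \<Rightarrow> ('e \<Rightarrow> 'v) \<Rightarrow> 'v \<Rightarrow> nat" where
  "vdegree E src tgt v = card {e\<in>E. src e = v} + card {e\<in>E. tgt e = v}"

definition standard_graph ::
  "'v set \<Rightarrow> 'e set \<Rightarrow> ('e \<Rightarrow> 'v) \<Rightarrow> ('e \<Rightarrow> 'v) \<Rightarrow> ('e \<Rightarrow> real) \<Rightarrow> bool" where
  "standard_graph V E src tgt L \<longleftrightarrow>
     metric_graph V E src tgt L \<and> graph_connected V E src tgt \<and>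
     (\<forall>v\<in>V. vdegree E src tgt v \<noteq> 2)"

definition single_loop :: "'v set \<Rightarrow> 'e set \<Rightarrow> ('e \<Rightarrow> 'v) \<Rightarrow> ('e \<Rightarrow> 'v) \<Rightarrow> bool" where
  "single_loop V E src tgt \<longleftrightarrow> (\<exists>v e. V = {v} \<and> E = {e} \<and> src e = v \<and> tgt e = v)"

definition nontrivial_graph :: "'v set \<Rightarrow> 'e set \<Rightarrow> ('e \<Rightarrow> 'v) \<Rightarrow> ('e \<Rightarrow> 'v) \<Rightarrow> bool" where
  "nontrivial_graph V E src tgt \<longleftrightarrow> \<not> single_loop V E src tgt"

text \<open>f is an eigenfunction of the Neumann-Kirchhoff Laplacian with eigenvalue lam:
  on each edge f e is twice differentiable on the closed interval [0, L e]
  (one-sided at the ends), with derivative d e, and - f'' = lam f;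
  f is continuous at the vertices, satisfies the Kirchhoff condition (sum of
  outgoing derivatives is zero; at x = 0 the outgoing derivative is f'(0), at x = L it is -f'(L)),
  and f is not identically zero.\<close>
definition neumann_eigenfunction ::
  "'v set \<Rightarrow> 'e set \<Rightarrow> ('e \<Rightarrow> 'v) \<Rightarrow> ('e \<Rightarrow> 'v) \<Rightarrow> ('e \<Rightarrow> real) \<Rightarrow> real \<Rightarrow> ('e \<Rightarrow> real \<Rightarrow> real) \<Rightarrow> bool" where
  "neumann_eigenfunction V E src tgt L lam f \<longleftrightarrow>
     (\<exists>d :: 'e \<Rightarrow> real \<Rightarrow> real.
        (\<forall>e\<in>E. \<forall>x\<in>{0..L e}.
            (f e has_real_derivative d e x) (at x within {0..L e}) \<and>
            (d e has_real_derivative (- lam * f e x)) (at x within {0..L e})) \<and>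
        (\<forall>v\<in>V. \<exists>c. (\<forall>e\<in>E. src e = v \<longrightarrow> f e 0 = c) \<and> (\<forall>e\<in>E. tgt e = v \<longrightarrow> f e (L e) = c)) \<and>
        (\<forall>v\<in>V. (\<Sum>e\<in>{e\<in>E. src e = v}. d e 0) + (\<Sum>e\<in>{e\<in>E. tgt e = v}. - d e (L e)) = 0)) \<and>
     (\<exists>e\<in>E. \<exists>x\<in>{0..L e}. f e x \<noteq> 0)"

definition real_eigenfunction ::
  "'v set \<Rightarrow> 'e set \<Rightarrow> ('e \<Rightarrow> 'v) \<Rightarrow> ('e \<Rightarrow> 'v) \<Rightarrow> ('e \<Rightarrow> real) \<Rightarrow> ('e \<Rightarrow> real \<Rightarrow> real) \<Rightarrow> bool" where
  "real_eigenfunction V E src tgt L f \<longleftrightarrow> (\<exists>lam. neumann_eigenfunction V E src tgt L lam f)"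

definition graph_fun_constant :: "'e set \<Rightarrow> ('e \<Rightarrow> real) \<Rightarrow> ('e \<Rightarrow> real \<Rightarrow> real) \<Rightarrow> bool" where
  "graph_fun_constant E L f \<longleftrightarrow> (\<exists>c. \<forall>e\<in>E. \<forall>x\<in>{0..L e}. f e x = c)"

definition morse_on :: "real \<Rightarrow> (real \<Rightarrow> real) \<Rightarrow> bool" where
  "morse_on l g \<longleftrightarrow> \<not> (\<exists>x\<in>{0<..<l}. deriv g x = 0 \<and> deriv (deriv g) x = 0)"

definition morse_eigenfunction :: "'e set \<Rightarrow> ('e \<Rightarrow> real) \<Rightarrow> ('e \<Rightarrow> real \<Rightarrow> real) \<Rightarrow> bool" where
  "morse_eigenfunction E L f \<longleftrightarrow> (\<forall>e\<in>E. morse_on (L e) (f e))"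

end

(* For lam /= 0, an interior point where
   f' and f'' vanish is a point where f and f' vanish, and then the energy f^2 + f'^2, whose
   derivative is bounded by |1 - lam| times itself, vanishes on the whole edge by a Gronwall
   argument; conversely f = 0 on an edge clearly violates the Morse condition.  The eigenvalue 0
   is excluded because on a connected graph its eigenfunctions are constant: f is affine on each
   edge, and the Kirchhoff conditions weighted by the vertex values of f give
   sum_e (slope_e)^2 * L e = 0. *)
theory Submission
  imports Defs
begin

definition eigen_ode_on :: "real \<Rightarrow> real \<Rightarrow> (real \<Rightarrow> real) \<Rightarrow> (real \<Rightarrow> real) \<Rightarrow> bool" where
  "eigen_ode_on l lam f d \<longleftrightarrow>
     (\<forall>x\<in>{0..l}. (f has_real_derivative d x) (at x within {0..l}) \<and>
                 (d has_real_derivative (- lam * f x)) (at x within {0..l}))"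

lemma gronwall_zero_right:
  fixes g g' :: "real \<Rightarrow> real"
  assumes "a \<le> b" and "continuous_on {a..b} g"
    and "\<And>t. a < t \<Longrightarrow> t < b \<Longrightarrow> (g has_real_derivative g' t) (at t)"
    and "\<And>t. a < t \<Longrightarrow> t < b \<Longrightarrow> g' t \<le> K * g t"
    and "g a = 0"
  shows "g b \<le> 0"
proof -
  define h where "h t = g t * exp (- K * t)" for t
  have "h b \<le> h a"
  proof (rule DERIV_nonpos_imp_decreasing_open[OF \<open>a \<le> b\<close>])
    fix t assume t: "a < t" "t < b"
    have "(h has_real_derivative (g' t - K * g t) * exp (- K * t)) (at t)"
      unfolding h_def using assms(3)[OF t]
      by (auto intro!: derivative_eq_intros simp: algebra_simps)
    moreover have "(g' t - K * g t) * exp (- K * t) \<le> 0"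
      using assms(4)[OF t] by (simp add: mult_nonpos_nonneg)
    ultimately show "\<exists>D. (h has_real_derivative D) (at t) \<and> D \<le> 0" by blast
  qed (unfold h_def, intro continuous_intros assms(2))
  then show ?thesis using \<open>g a = 0\<close> by (simp add: h_def mult_le_0_iff)
qed

lemma gronwall_zero_left:
  fixes g g' :: "real \<Rightarrow> real"
  assumes "a \<le> b" and "continuous_on {a..b} g"
    and "\<And>t. a < t \<Longrightarrow> t < b \<Longrightarrow> (g has_real_derivative g' t) (at t)"
    and "\<And>t. a < t \<Longrightarrow> t < b \<Longrightarrow> - K * g t \<le> g' t"
    and "g b = 0"
  shows "g a \<le> 0"
proof -
  have "g (- (- a)) \<le> 0"
  proof (rule gronwall_zero_right[where g = "\<lambda>s. g (- s)" and g' = "\<lambda>s. - g' (- s)" and K = K])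
    show "continuous_on {- b..- a} (\<lambda>s. g (- s))"
      by (intro continuous_on_compose2[OF assms(2)] continuous_intros) auto
    fix s assume s: "- b < s" "s < - a"
    show "((\<lambda>s. g (- s)) has_real_derivative - g' (- s)) (at s)"
      using assms(3)[of "- s"] s DERIV_mirror[where f = g and x = s and y = "g' (- s)"] by simp
    show "- g' (- s) \<le> K * g (- s)"
      using assms(4)[of "- s"] s by simp
  qed (use assms in auto)
  then show ?thesis by simp
qed

lemma eigen_ode_on_at:
  assumes "eigen_ode_on l lam f d" and "x \<in> {0<..<l}"
  shows "(f has_real_derivative d x) (at x)" and "(d has_real_derivative (- lam * f x)) (at x)"
  using assms(1)[unfolded eigen_ode_on_def, rule_format, of x] assms(2) at_within_Icc_at[of 0 x l]
  by auto

lemma eigen_ode_on_continuous: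
  assumes "eigen_ode_on l lam f d"
  shows "continuous_on {0..l} f" and "continuous_on {0..l} d"
  using assms unfolding eigen_ode_on_def continuous_on_eq_continuous_within
  by (auto intro: DERIV_continuous)

lemma eigen_ode_on_deriv:
  assumes "eigen_ode_on l lam f d" and "x \<in> {0<..<l}"
  shows "deriv f x = d x" and "deriv (deriv f) x = - lam * f x"
proof -
  have deriv_f: "deriv f y = d y" if "y \<in> {0<..<l}" for y
    using eigen_ode_on_at(1)[OF assms(1) that] by (rule DERIV_imp_deriv)
  then show "deriv f x = d x" using assms(2) .
  have "(deriv f has_real_derivative (- lam * f x)) (at x)"
    by (rule has_field_derivative_transform_within_open[OF eigen_ode_on_at(2)[OF assms], where S = "{0<..<l}"])
      (use assms(2) deriv_f in auto)
  then show "deriv (deriv f) x = - lam * f x" by (rule DERIV_imp_deriv)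
qed

lemma eigen_ode_on_zero_if_zero_at:
  assumes ode: "eigen_ode_on l lam f d"
    and x0: "x0 \<in> {0..l}" "f x0 = 0" "d x0 = 0"
    and y: "y \<in> {0..l}"
  shows "f y = 0"
proof -
  define K where "K = \<bar>1 - lam\<bar>"
  define En where "En t = (f t)\<^sup>2 + (d t)\<^sup>2" for t
  have En_cont: "continuous_on {0..l} En"
    unfolding En_def using eigen_ode_on_continuous[OF ode] by (intro continuous_intros)
  have En_deriv: "(En has_real_derivative 2 * (1 - lam) * f t * d t) (at t)"
    if "t \<in> {0<..<l}" for t
    unfolding En_def using eigen_ode_on_at[OF ode that]
    by (auto intro!: derivative_eq_intros simp: algebra_simps)
  have En_growth: "\<bar>2 * (1 - lam) * f t * d t\<bar> \<le> K * En t" for t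
  proof -
    have "2 * \<bar>f t\<bar> * \<bar>d t\<bar> \<le> En t"
      using sum_squares_bound[of "\<bar>f t\<bar>" "\<bar>d t\<bar>"] by (simp add: En_def)
    then have "K * (2 * \<bar>f t\<bar> * \<bar>d t\<bar>) \<le> K * En t"
      by (simp add: K_def mult_left_mono)
    then show ?thesis unfolding K_def abs_mult by (simp add: mult_ac)
  qed
  have "En y \<le> 0"
  proof (cases "x0 \<le> y")
    case True
    show ?thesis
    proof (rule gronwall_zero_right[where g = En, OF True])
      show "continuous_on {x0..y} En" using x0 y by (intro continuous_on_subset[OF En_cont]) auto
      fix t assume "x0 < t" "t < y"
      then have t: "t \<in> {0<..<l}" using x0 y by auto
      show "(En has_real_derivative 2 * (1 - lam) * f t * d t) (at t)" using En_deriv[OF t] .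
      show "2 * (1 - lam) * f t * d t \<le> K * En t" using En_growth[of t] by linarith
    qed (simp add: En_def x0)
  next
    case False
    show ?thesis
    proof (rule gronwall_zero_left[where g = En])
      show "y \<le> x0" using False by simp
      show "continuous_on {y..x0} En" using x0 y by (intro continuous_on_subset[OF En_cont]) auto
      fix t assume "y < t" "t < x0"
      then have t: "t \<in> {0<..<l}" using x0 y by auto
      show "(En has_real_derivative 2 * (1 - lam) * f t * d t) (at t)" using En_deriv[OF t] .
      show "- K * En t \<le> 2 * (1 - lam) * f t * d t" using En_growth[of t] by linarith
    qed (simp add: En_def x0)
  qed
  then have "(f y)\<^sup>2 \<le> 0" unfolding En_def using zero_le_power2[of "d y"] by linarith
  then show "f y = 0" by simp
qed

lemma eigen_ode_on_morse_iff:
  assumes ode: "eigen_ode_on l lam f d" and "lam \<noteq> 0" and "0 < l"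
  shows "morse_on l f \<longleftrightarrow> \<not> (\<forall>x\<in>{0..l}. f x = 0)"
proof
  assume morse: "morse_on l f"
  show "\<not> (\<forall>x\<in>{0..l}. f x = 0)"
  proof
    assume zero: "\<forall>x\<in>{0..l}. f x = 0"
    define x where "x = l / 2"
    have x: "x \<in> {0<..<l}" using \<open>0 < l\<close> by (simp add: x_def)
    have "(f has_real_derivative 0) (at x)"
      by (rule has_field_derivative_transform_within_open[OF DERIV_const, where S = "{0<..<l}"])
        (use x zero in auto)
    then have "d x = 0" using DERIV_unique[OF eigen_ode_on_at(1)[OF ode x]] by blast
    then show False
      using morse x zero eigen_ode_on_deriv[OF ode x] unfolding morse_on_def by auto
  qed
next
  assume nonzero: "\<not> (\<forall>x\<in>{0..l}. f x = 0)"
  show "morse_on l f"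
    unfolding morse_on_def
  proof
    assume "\<exists>x\<in>{0<..<l}. deriv f x = 0 \<and> deriv (deriv f) x = 0"
    then obtain x where x: "x \<in> {0<..<l}" and "deriv f x = 0" "deriv (deriv f) x = 0"
      by blast
    then have "d x = 0" and "f x = 0"
      using eigen_ode_on_deriv[OF ode x] \<open>lam \<noteq> 0\<close> by simp_all
    then have "\<forall>y\<in>{0..l}. f y = 0"
      using x eigen_ode_on_zero_if_zero_at[OF ode, of x] by simp
    then show False using nonzero by blast
  qed
qed

lemma eigen_ode_on_zero_eigenvalue_affine:
  assumes ode: "eigen_ode_on l 0 f d" and "0 \<le> l" and x: "x \<in> {0..l}"
  shows "d x = d 0" and "f x = f 0 + d 0 * x"
proof -
  have zero: "0 \<in> {0..l}" using \<open>0 \<le> l\<close> by simp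
  have d_deriv: "(d has_real_derivative 0) (at y within {0..l})" if "y \<in> {0..l}" for y
    using ode that unfolding eigen_ode_on_def by simp
  obtain a where "\<forall>y\<in>{0..l}. d y = a"
    using has_field_derivative_zero_constant[OF convex_real_interval(5) d_deriv] by blast
  then have slope: "d y = d 0" if "y \<in> {0..l}" for y using that zero by simp
  then show "d x = d 0" using x .
  have "((\<lambda>y. f y - d 0 * y) has_real_derivative 0) (at y within {0..l})" if "y \<in> {0..l}" for y
    using ode that slope[OF that] unfolding eigen_ode_on_def
    by (auto intro!: derivative_eq_intros)
  from has_field_derivative_zero_constant[OF convex_real_interval(5) this]
  obtain b where b: "\<forall>y\<in>{0..l}. f y - d 0 * y = b" by blast
  have "f x - d 0 * x = f 0 - d 0 * 0" using b[rule_format, OF x] b[rule_format, OF zero] by simp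
  then show "f x = f 0 + d 0 * x" by simp
qed

lemma kirchhoff_weighted_flux_sum:
  fixes c :: "'v \<Rightarrow> real" and p q :: "'e \<Rightarrow> real"
  assumes "finite V" and "finite E" and ends: "\<forall>e\<in>E. src e \<in> V \<and> tgt e \<in> V"
    and kirchhoff: "\<forall>v\<in>V. (\<Sum>e\<in>{e\<in>E. src e = v}. p e) + (\<Sum>e\<in>{e\<in>E. tgt e = v}. - q e) = 0"
  shows "(\<Sum>e\<in>E. c (src e) * p e - c (tgt e) * q e) = 0"
proof -
  have "(\<Sum>e\<in>E. c (src e) * p e - c (tgt e) * q e)
      = (\<Sum>v\<in>V. \<Sum>e\<in>{e\<in>E. src e = v}. c (src e) * p e)
        + (\<Sum>v\<in>V. \<Sum>e\<in>{e\<in>E. tgt e = v}. - (c (tgt e) * q e))"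
    using sum.group[OF \<open>finite E\<close> \<open>finite V\<close>, of src "\<lambda>e. c (src e) * p e"]
      sum.group[OF \<open>finite E\<close> \<open>finite V\<close>, of tgt "\<lambda>e. - (c (tgt e) * q e)"] ends
    by (simp add: image_subset_iff sum_subtractf sum_negf)
  also have "\<dots> = (\<Sum>v\<in>V. c v * ((\<Sum>e\<in>{e\<in>E. src e = v}. p e) + (\<Sum>e\<in>{e\<in>E. tgt e = v}. - q e)))"
    by (simp add: distrib_left sum_distrib_left sum.distrib)
  also have "\<dots> = 0" using kirchhoff by simp
  finally show ?thesis .
qed

lemma graph_connected_constant:
  assumes "graph_connected V E src tgt" and "\<forall>e\<in>E. c (src e) = c (tgt e)"
    and "u \<in> V" and "w \<in> V"
  shows "c u = c w"
proof -
  have "(u, w) \<in> ({(src e, tgt e) | e. e \<in> E} \<union> {(tgt e, src e) | e. e \<in> E})\<^sup>*"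
    using assms(1,3,4) unfolding graph_connected_def by blast
  then show ?thesis
  proof (induction rule: rtrancl_induct)
    case (step y z)
    then show ?case using assms(2) by auto
  qed simp
qed

lemma neumann_eigenfunction_eq_eigen_ode_on:
  "neumann_eigenfunction V E src tgt L lam f \<longleftrightarrow>
     (\<exists>d. (\<forall>e\<in>E. eigen_ode_on (L e) lam (f e) (d e)) \<and>
        (\<forall>v\<in>V. \<exists>c. (\<forall>e\<in>E. src e = v \<longrightarrow> f e 0 = c) \<and> (\<forall>e\<in>E. tgt e = v \<longrightarrow> f e (L e) = c)) \<and>
        (\<forall>v\<in>V. (\<Sum>e\<in>{e\<in>E. src e = v}. d e 0) + (\<Sum>e\<in>{e\<in>E. tgt e = v}. - d e (L e)) = 0)) \<and>
     (\<exists>e\<in>E. \<exists>x\<in>{0..L e}. f e x \<noteq> 0)"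
  unfolding neumann_eigenfunction_def eigen_ode_on_def ..

lemma neumann_eigenfunction_zero_eigenvalue_constant:
  assumes graph: "metric_graph V E src tgt L" and conn: "graph_connected V E src tgt"
    and eig: "neumann_eigenfunction V E src tgt L 0 f"
  shows "graph_fun_constant E L f"
proof -
  have "finite V" "finite E" "V \<noteq> {}" and ends: "\<forall>e\<in>E. src e \<in> V \<and> tgt e \<in> V"
    and L_pos: "\<And>e. e \<in> E \<Longrightarrow> 0 < L e"
    using graph unfolding metric_graph_def by auto
  obtain d where ode: "\<And>e. e \<in> E \<Longrightarrow> eigen_ode_on (L e) 0 (f e) (d e)"
    and vertex: "\<forall>v\<in>V. \<exists>c. (\<forall>e\<in>E. src e = v \<longrightarrow> f e 0 = c) \<and> (\<forall>e\<in>E. tgt e = v \<longrightarrow> f e (L e) = c)"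
    and kirchhoff: "\<forall>v\<in>V. (\<Sum>e\<in>{e\<in>E. src e = v}. d e 0) + (\<Sum>e\<in>{e\<in>E. tgt e = v}. - d e (L e)) = 0"
    using eig unfolding neumann_eigenfunction_eq_eigen_ode_on by blast
  obtain c where c: "\<forall>v\<in>V. (\<forall>e\<in>E. src e = v \<longrightarrow> f e 0 = c v) \<and> (\<forall>e\<in>E. tgt e = v \<longrightarrow> f e (L e) = c v)"
    using bchoice[OF vertex] by blast
  have f_src: "f e 0 = c (src e)" and f_tgt: "f e (L e) = c (tgt e)" if "e \<in> E" for e
    using c ends that by blast+
  have affine: "f e x = c (src e) + d e 0 * x" if "e \<in> E" "x \<in> {0..L e}" for e x
    using eigen_ode_on_zero_eigenvalue_affine(2)[OF ode[OF that(1)] _ that(2)] L_pos[OF that(1)]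
    by (simp add: f_src[OF that(1)])
  have c_tgt: "c (tgt e) = c (src e) + d e 0 * L e" if "e \<in> E" for e
    using affine[OF that, of "L e"] L_pos[OF that] by (simp add: f_tgt[OF that])
  have d_tgt: "d e (L e) = d e 0" if "e \<in> E" for e
    using eigen_ode_on_zero_eigenvalue_affine(1)[OF ode[OF that], of "L e"] L_pos[OF that] by simp
  have "(\<Sum>e\<in>E. c (src e) * d e 0 - c (tgt e) * d e (L e)) = 0"
    using kirchhoff_weighted_flux_sum[OF \<open>finite V\<close> \<open>finite E\<close> ends,
        of "\<lambda>e. d e 0" "\<lambda>e. d e (L e)"] kirchhoff by blast
  then have "(\<Sum>e\<in>E. (d e 0)\<^sup>2 * L e) = 0"
    by (simp add: c_tgt d_tgt algebra_simps power2_eq_square sum_negf cong: sum.cong)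
  then have flat: "d e 0 = 0" if "e \<in> E" for e
    using sum_nonneg_eq_0_iff[OF \<open>finite E\<close>, of "\<lambda>e. (d e 0)\<^sup>2 * L e"] L_pos that
    by (fastforce simp: less_imp_le)
  obtain v0 where "v0 \<in> V" using \<open>V \<noteq> {}\<close> by blast
  have "\<forall>e\<in>E. c (src e) = c (tgt e)" using c_tgt flat by simp
  then have src_value: "c (src e) = c v0" if "e \<in> E" for e
    using graph_connected_constant[OF conn] ends \<open>v0 \<in> V\<close> that by blast
  have "f e x = c v0" if "e \<in> E" "x \<in> {0..L e}" for e x
    using affine[OF that] flat[OF that(1)] src_value[OF that(1)] by simp
  then show ?thesis unfolding graph_fun_constant_def by blast
qed

theorem lemma7p2:
  fixes V :: "'v set" and E :: "'e set" and src tgt :: "'e \<Rightarrow> 'v"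
    and L :: "'e \<Rightarrow> real" and f :: "'e \<Rightarrow> real \<Rightarrow> real"
  assumes "standard_graph V E src tgt L"
    and "nontrivial_graph V E src tgt"
    and "real_eigenfunction V E src tgt L f"
    and "\<not> graph_fun_constant E L f"
  shows "morse_eigenfunction E L f \<longleftrightarrow> \<not> (\<exists>e\<in>E. \<forall>x\<in>{0..L e}. f e x = 0)"
proof -
  have graph: "metric_graph V E src tgt L" and conn: "graph_connected V E src tgt"
    using assms(1) unfolding standard_graph_def by auto
  obtain lam where eig: "neumann_eigenfunction V E src tgt L lam f"
    using assms(3) unfolding real_eigenfunction_def by blast
  have "lam \<noteq> 0"
    using neumann_eigenfunction_zero_eigenvalue_constant[OF graph conn] eig assms(4) by blast
  obtain d where ode: "\<forall>e\<in>E. eigen_ode_on (L e) lam (f e) (d e)"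
    using eig unfolding neumann_eigenfunction_eq_eigen_ode_on by blast
  have "morse_on (L e) (f e) \<longleftrightarrow> \<not> (\<forall>x\<in>{0..L e}. f e x = 0)" if "e \<in> E" for e
    using eigen_ode_on_morse_iff[of "L e" lam "f e" "d e"] ode \<open>lam \<noteq> 0\<close> graph that
    unfolding metric_graph_def by blast
  then show ?thesis unfolding morse_eigenfunction_def by blast
qed

end
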